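(* Let $U$ be a universal Turing machine and define $$\Upsilon_U=\sum_{i\ge 1}\frac{2^{-i}}{t_{\mathrm{bin}(i)}}\,,$$ with the convention that a term equals $0$ when $t_{\mathrm{bin}(i)}=\infty$. Then $0<\Upsilon_U<1$, and $\Upsilon_U$ is a computable real number: there is an algorithm which, given $n\ge 1$, outputs a rational number within $2^{-n}$ of $\Upsilon_U$.
   Context: Strings are binary. $\Sigma^*$ denotes the set of binary strings, and $\mathbf{N}=\{1,2,\dots\}$. The map $\mathrm{bin}:\mathbf{N}\to\Sigma^*$ is the computable bijection sending $n$ to its binary expansion with the leading $1$ removed. For example, $\mathrm{bin}(1)=\lambda$ (the empty string), $\mathrm{bin}(2)=0$, $\mathrm{bin}(3)=1$, $\mathrm{bin}(4)=00$. For a program $p$, $t_p\in\mathbf{N}\cup\{\infty\}$ is the exact number of steps after which $U(p)$ halts, with $t_p=\infty$ if $U(p)$ never halts. Halting times are at least $1$. $U$ is universal, so in particular some program halts on $U$ and some program does not halt on $U$. *)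

theory Defs
  imports Complex_Main "HOL-Library.Extended_Nat"
begin

text \<open>Binary strings are lists of booleans (False = 0, True = 1).
  bin n is the binary expansion of n with the leading 1 removed (for n \<ge> 1).\<close>

fun bin :: "nat \<Rightarrow> bool list" where
  "bin n = (if n \<le> 1 then [] else bin (n div 2) @ [odd n])"

text \<open>Inverse of bin: the numeral code of a string s is the number with binary
  expansion 1s.  Machines receive their program through this code.\<close>

definition prog_code :: "bool list \<Rightarrow> nat" where
  "prog_code s = foldl (\<lambda>a b. 2 * a + (if b then 1 else 0)) 1 s"

datatype recf = Zero | Succ | Proj nat | Comp recf "recf list" | Prim recf recf | Mn recf

inductive eval :: "recf \<Rightarrow> nat list \<Rightarrow> nat \<Rightarrow> bool" where
  eval_Zero: "eval Zero xs 0"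
| eval_Succ: "eval Succ [x] (Suc x)"
| eval_Proj: "i < length xs \<Longrightarrow> eval (Proj i) xs (xs ! i)"
| eval_Comp: "list_all2 (\<lambda>g y. eval g xs y) gs ys \<Longrightarrow> eval f ys z \<Longrightarrow> eval (Comp f gs) xs z"
| eval_Prim0: "eval f xs z \<Longrightarrow> eval (Prim f g) (0 # xs) z"
| eval_PrimS: "eval (Prim f g) (n # xs) r \<Longrightarrow> eval g (n # r # xs) z \<Longrightarrow> eval (Prim f g) (Suc n # xs) z"
| eval_Mn: "eval f (y # xs) 0 \<Longrightarrow> (\<forall>k<y. \<exists>v. eval f (k # xs) v \<and> v \<noteq> 0) \<Longrightarrow> eval (Mn f) xs y"

definition computable1 :: "(nat \<Rightarrow> nat) \<Rightarrow> bool" where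
  "computable1 f \<longleftrightarrow> (\<exists>r. \<forall>n. eval r [n] (f n))"

definition computable_real :: "real \<Rightarrow> bool" where
  "computable_real x \<longleftrightarrow>
     (\<exists>a b d. computable1 a \<and> computable1 b \<and> computable1 d \<and>
        (\<forall>n\<ge>1. d n > 0 \<and> \<bar>(real (a n) - real (b n)) / real (d n) - x\<bar> \<le> (1/2) ^ n))"

text \<open>A machine U is given by computable functions on (codes of) configurations:
  init (initial configuration for the program with code prog_code p), step (one
  transition) and halt (nonzero iff the configuration is halting).  Any Turing
  machine is of this form.  t_p is the number of steps after which U(p) halts.\<close>

definition halts_after :: "(nat \<Rightarrow> nat) \<Rightarrow> (nat \<Rightarrow> nat) \<Rightarrow> (nat \<Rightarrow> nat) \<Rightarrow> bool list \<Rightarrow> nat \<Rightarrow> bool" where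
  "halts_after init step halt p k \<longleftrightarrow> halt ((step ^^ k) (init (prog_code p))) \<noteq> 0"

definition htime :: "(nat \<Rightarrow> nat) \<Rightarrow> (nat \<Rightarrow> nat) \<Rightarrow> (nat \<Rightarrow> nat) \<Rightarrow> bool list \<Rightarrow> enat" where
  "htime init step halt p =
     (if \<exists>k. halts_after init step halt p k
      then enat (LEAST k. halts_after init step halt p k) else \<infinity>)"

definition Upsilon :: "(nat \<Rightarrow> nat) \<Rightarrow> (nat \<Rightarrow> nat) \<Rightarrow> (nat \<Rightarrow> nat) \<Rightarrow> real" where
  "Upsilon init step halt =
     (\<Sum>j. (case htime init step halt (bin (Suc j)) of
              enat k \<Rightarrow> (1/2) ^ Suc j / real k
            | \<infinity> \<Rightarrow> 0))"

end

theory Submission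
  imports Defs
begin

(* Every term of the series lies in [0, 2^-(j+1)], a term is positive exactly when program bin(j+1)
   halts and vanishes when it does not; since bin is onto, Upsilon lies strictly between 0 and 1.
   For computability, cut the series at j <= n and drop the programs that have not halted after
   T = 2^(n+1) steps: the tail costs at most 2^-(n+1), and every dropped term of the head is below
   2^-(j+1)/T, so the error is at most 2^-n.  What remains is a finite sum of rationals
   2^-(j+1)/t with t <= T, which is evaluated exactly over the common denominator 2^(n+1) T!
   by a primitive recursive function of n. *)

section \<open>Closure properties of computable functions\<close>

definition computable_nary :: "nat \<Rightarrow> (nat list \<Rightarrow> nat) \<Rightarrow> bool" where
  "computable_nary k f \<longleftrightarrow> (\<exists>r. \<forall>xs. length xs = k \<longrightarrow> eval r xs (f xs))"

lemma computable_nary_cong: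
  "computable_nary k f \<Longrightarrow> (\<And>xs. length xs = k \<Longrightarrow> f xs = g xs) \<Longrightarrow> computable_nary k g"
  unfolding computable_nary_def by metis

lemma computable1_iff_nary: "computable1 f \<longleftrightarrow> computable_nary 1 (\<lambda>xs. f (hd xs))"
proof
  assume "computable1 f"
  then obtain r where "\<forall>n. eval r [n] (f n)" unfolding computable1_def by blast
  moreover have "xs = [hd xs]" if "length xs = 1" for xs :: "nat list"
    using that by (cases xs) auto
  ultimately show "computable_nary 1 (\<lambda>xs. f (hd xs))"
    unfolding computable_nary_def by metis
next
  assume "computable_nary 1 (\<lambda>xs. f (hd xs))"
  then show "computable1 f"
    unfolding computable_nary_def computable1_def by (metis length_Cons list.sel(1) list.size(3) One_nat_def)
qed

lemma computable1_of_nary: "computable_nary 1 (\<lambda>xs. f (xs ! 0)) \<Longrightarrow> computable1 f"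
  unfolding computable1_iff_nary
proof (rule computable_nary_cong)
  fix xs :: "nat list"
  assume "length xs = 1"
  then show "f (xs ! 0) = f (hd xs)" by (cases xs) simp_all
qed

lemma computable1_Suc: "computable1 Suc"
  unfolding computable1_def by (rule exI[of _ Succ]) (simp add: eval_Succ)

lemma computable_nary_zero: "computable_nary k (\<lambda>_. 0)"
  unfolding computable_nary_def by (blast intro: eval_Zero)

lemma computable_nary_proj: "i < k \<Longrightarrow> computable_nary k (\<lambda>xs. xs ! i)"
  unfolding computable_nary_def by (blast intro: eval_Proj)

lemma computable_nary_comp:
  assumes "computable_nary m f" and "length gs = m" and "\<forall>g\<in>set gs. computable_nary k g"
  shows "computable_nary k (\<lambda>xs. f (map (\<lambda>g. g xs) gs))"
proof -
  have "\<exists>rs. \<forall>xs. length xs = k \<longrightarrow> list_all2 (\<lambda>r y. eval r xs y) rs (map (\<lambda>g. g xs) gs)"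
    using assms(3)
  proof (induction gs)
    case Nil
    show ?case by simp
  next
    case (Cons g gs)
    then obtain rs where "\<forall>xs. length xs = k \<longrightarrow> list_all2 (\<lambda>r y. eval r xs y) rs (map (\<lambda>g. g xs) gs)"
      by auto
    moreover obtain r where "\<forall>xs. length xs = k \<longrightarrow> eval r xs (g xs)"
      using Cons.prems unfolding computable_nary_def by auto
    ultimately show ?case by (intro exI[of _ "r # rs"]) simp
  qed
  then obtain rs where rs: "\<forall>xs. length xs = k \<longrightarrow> list_all2 (\<lambda>r y. eval r xs y) rs (map (\<lambda>g. g xs) gs)"
    by blast
  obtain r where r: "\<forall>xs. length xs = m \<longrightarrow> eval r xs (f xs)"
    using assms(1) unfolding computable_nary_def by blast
  show ?thesis
    unfolding computable_nary_def
    by (rule exI[of _ "Comp r rs"]) (use rs r assms(2) in \<open>auto intro: eval_Comp\<close>)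
qed

lemma computable_nary_comp2:
  "computable_nary 2 f \<Longrightarrow> computable_nary k g\<^sub>1 \<Longrightarrow> computable_nary k g\<^sub>2 \<Longrightarrow>
   computable_nary k (\<lambda>xs. f [g\<^sub>1 xs, g\<^sub>2 xs])"
  using computable_nary_comp[of 2 f "[g\<^sub>1, g\<^sub>2]" k] by simp

lemma computable_nary_compose1:
  assumes "computable1 f" and "computable_nary k g"
  shows "computable_nary k (\<lambda>xs. f (g xs))"
  using computable_nary_comp[of 1 "\<lambda>xs. f (hd xs)" "[g]" k] assms
  unfolding computable1_iff_nary by simp

lemma computable_nary_reindex:
  assumes "computable_nary m f" and "\<forall>i<m. \<sigma> i < k"
  shows "computable_nary k (\<lambda>ys. f (map (\<lambda>i. ys ! \<sigma> i) [0..<m]))"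
proof -
  have "computable_nary k (\<lambda>ys. f (map (\<lambda>g. g ys) (map (\<lambda>i ys. ys ! \<sigma> i) [0..<m])))"
    using assms by (intro computable_nary_comp) (auto intro: computable_nary_proj)
  then show ?thesis by (simp add: comp_def)
qed

lemma computable_nary_cons:
  assumes "computable_nary (Suc k) h" and "computable_nary k g"
  shows "computable_nary k (\<lambda>xs. h (g xs # xs))"
proof -
  have "computable_nary k (\<lambda>xs. h (map (\<lambda>g. g xs) (g # map (\<lambda>i xs. xs ! i) [0..<k])))"
    using assms by (intro computable_nary_comp) (auto intro: computable_nary_proj)
  then show ?thesis by (rule computable_nary_cong) (simp add: comp_def, metis map_nth)
qed

lemma computable_nary_drop_second:
  assumes "computable_nary (Suc k) f"
  shows "computable_nary (Suc (Suc k)) (\<lambda>ys. f (hd ys # tl (tl ys)))"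
proof -
  have "computable_nary (Suc (Suc k))
      (\<lambda>ys. f (map (\<lambda>i. ys ! (if i = 0 then 0 else Suc i)) [0..<Suc k]))"
    by (rule computable_nary_reindex[OF assms]) auto
  then show ?thesis
  proof (rule computable_nary_cong)
    fix ys :: "nat list"
    assume "length ys = Suc (Suc k)"
    then obtain a b zs where "ys = a # b # zs" and "length zs = k"
      by (metis Suc_length_conv)
    then show "f (map (\<lambda>i. ys ! (if i = 0 then 0 else Suc i)) [0..<Suc k]) = f (hd ys # tl (tl ys))"
      by (auto intro!: arg_cong[where f = f] nth_equalityI simp: nth_Cons' simp del: upt_Suc)
  qed
qed

lemma computable_nary_prim:
  assumes "computable_nary k f" and "computable_nary (Suc (Suc k)) g"
    and "\<And>xs. length xs = k \<Longrightarrow> h (0 # xs) = f xs"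
    and "\<And>n xs. length xs = k \<Longrightarrow> h (Suc n # xs) = g (n # h (n # xs) # xs)"
  shows "computable_nary (Suc k) h"
proof -
  obtain rf where rf: "\<forall>xs. length xs = k \<longrightarrow> eval rf xs (f xs)"
    using assms(1) unfolding computable_nary_def by blast
  obtain rg where rg: "\<forall>xs. length xs = Suc (Suc k) \<longrightarrow> eval rg xs (g xs)"
    using assms(2) unfolding computable_nary_def by blast
  have eval_h: "eval (Prim rf rg) (n # xs) (h (n # xs))" if "length xs = k" for n xs
  proof (induction n)
    case 0
    show ?case using rf that assms(3) by (auto intro: eval_Prim0)
  next
    case (Suc n)
    then show ?case using rg that assms(4) by (auto intro: eval_PrimS)
  qed
  show ?thesis
    unfolding computable_nary_def
  proof (intro exI allI impI)
    fix xs :: "nat list"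
    assume "length xs = Suc k"
    then obtain n ys where "xs = n # ys" and "length ys = k" by (cases xs) auto
    then show "eval (Prim rf rg) xs (h xs)" using eval_h by simp
  qed
qed

lemma computable_nary_Suc: "computable_nary k g \<Longrightarrow> computable_nary k (\<lambda>xs. Suc (g xs))"
  by (rule computable_nary_compose1[OF computable1_Suc])

lemma computable_nary_const: "computable_nary k (\<lambda>_. c)"
  by (induction c) (auto intro: computable_nary_zero computable_nary_Suc)

lemma computable1_prim:
  assumes "computable_nary 2 g" and "h 0 = c" and "\<And>n. h (Suc n) = g [n, h n]"
  shows "computable1 h"
proof -
  have "computable_nary (Suc 0) (\<lambda>xs. h (hd xs))"
  proof (rule computable_nary_prim[where f = "\<lambda>_. c" and g = "\<lambda>ys. g [ys ! 0, ys ! 1]"])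
    show "computable_nary (Suc (Suc 0)) (\<lambda>ys. g [ys ! 0, ys ! 1])"
      using computable_nary_comp2[OF assms(1) computable_nary_proj computable_nary_proj, of 0 2 1]
      by (simp add: numeral_2_eq_2)
  qed (auto simp: assms(2,3) intro: computable_nary_const)
  then show ?thesis by (simp add: computable1_iff_nary)
qed

lemma computable_nary_add:
  assumes "computable_nary k g\<^sub>1" and "computable_nary k g\<^sub>2"
  shows "computable_nary k (\<lambda>xs. g\<^sub>1 xs + g\<^sub>2 xs)"
proof -
  have "computable_nary 2 (\<lambda>xs. xs ! 0 + xs ! 1)"
    unfolding numeral_2_eq_2
    by (rule computable_nary_prim[where f = "\<lambda>xs. xs ! 0" and g = "\<lambda>ys. Suc (ys ! 1)"])
       (auto intro!: computable_nary_proj computable_nary_Suc)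
  from computable_nary_comp2[OF this assms] show ?thesis by simp
qed

lemma computable_nary_mult:
  assumes "computable_nary k g\<^sub>1" and "computable_nary k g\<^sub>2"
  shows "computable_nary k (\<lambda>xs. g\<^sub>1 xs * g\<^sub>2 xs)"
proof -
  have "computable_nary 2 (\<lambda>xs. xs ! 0 * xs ! 1)"
    unfolding numeral_2_eq_2
    by (rule computable_nary_prim[where f = "\<lambda>_. 0" and g = "\<lambda>ys. ys ! 2 + ys ! 1"])
       (auto intro!: computable_nary_proj computable_nary_add computable_nary_zero)
  from computable_nary_comp2[OF this assms] show ?thesis by simp
qed

lemma computable_nary_diff:
  assumes "computable_nary k g\<^sub>1" and "computable_nary k g\<^sub>2"
  shows "computable_nary k (\<lambda>xs. g\<^sub>1 xs - g\<^sub>2 xs)"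
proof -
  have "computable1 (\<lambda>n. n - 1)"
    by (rule computable1_prim[where g = "\<lambda>xs. xs ! 0" and c = 0]) (simp_all add: computable_nary_proj)
  then have pred: "computable_nary (Suc (Suc (Suc 0))) (\<lambda>ys. ys ! 1 - 1)"
    by (rule computable_nary_compose1[where f = "\<lambda>n. n - 1"]) (simp add: computable_nary_proj)
  have "computable_nary 2 (\<lambda>xs. xs ! 1 - xs ! 0)"
    unfolding numeral_2_eq_2
    by (rule computable_nary_prim[where f = "\<lambda>xs. xs ! 0", OF _ pred]) (simp_all add: computable_nary_proj)
  from computable_nary_comp2[OF this assms(2,1)] show ?thesis by simp
qed

lemma computable_nary_power2: "computable_nary k g \<Longrightarrow> computable_nary k (\<lambda>xs. 2 ^ g xs)"
proof (rule computable_nary_compose1[where f = "\<lambda>n. 2 ^ n"])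
  have "computable_nary 2 (\<lambda>xs. xs ! 1 + xs ! 1)"
    by (simp add: computable_nary_add computable_nary_proj)
  then show "computable1 (\<lambda>n. 2 ^ n)"
    by (rule computable1_prim[where c = 1]) simp_all
qed

lemma computable_nary_fact: "computable_nary k g \<Longrightarrow> computable_nary k (\<lambda>xs. fact (g xs))"
proof (rule computable_nary_compose1[where f = fact])
  have "computable_nary 2 (\<lambda>xs. Suc (xs ! 0) * xs ! 1)"
    by (simp only: computable_nary_mult computable_nary_Suc computable_nary_proj)
  then show "computable1 fact"
    by (rule computable1_prim[where c = 1]) simp_all
qed

lemma computable_nary_funpow:
  assumes "computable1 f" and "computable_nary k g" and "computable_nary k h"
  shows "computable_nary k (\<lambda>xs. (f ^^ g xs) (h xs))"
proof -
  have "computable_nary 2 (\<lambda>xs. (f ^^ xs ! 0) (xs ! 1))"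
    unfolding numeral_2_eq_2
    by (rule computable_nary_prim[where f = "\<lambda>xs. xs ! 0" and g = "\<lambda>ys. f (ys ! 1)"])
       (auto intro!: computable_nary_proj computable_nary_compose1[OF assms(1)])
  from computable_nary_comp2[OF this assms(2,3)] show ?thesis by simp
qed

lemma computable_nary_if_zero:
  assumes "computable_nary k a" and "computable_nary k g\<^sub>1" and "computable_nary k g\<^sub>2"
  shows "computable_nary k (\<lambda>xs. if a xs = 0 then g\<^sub>1 xs else g\<^sub>2 xs)"
proof -
  have "computable_nary k (\<lambda>xs. g\<^sub>1 xs * (1 - a xs) + g\<^sub>2 xs * (1 - (1 - a xs)))"
    using assms by (intro computable_nary_add computable_nary_mult computable_nary_diff computable_nary_const)
  then show ?thesis by (rule computable_nary_cong) simp
qed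

lemma computable_nary_sum:
  assumes "computable_nary (Suc k) f" and "computable_nary k g"
  shows "computable_nary k (\<lambda>xs. \<Sum>j<g xs. f (j # xs))"
proof -
  have "computable_nary (Suc k) (\<lambda>ys. \<Sum>j<hd ys. f (j # tl ys))"
    by (rule computable_nary_prim[where f = "\<lambda>_. 0" and g = "\<lambda>ys. ys ! 1 + f (hd ys # tl (tl ys))"])
       (auto intro!: computable_nary_add computable_nary_proj computable_nary_zero
         computable_nary_drop_second[OF assms(1)])
  from computable_nary_cons[OF this assms(2)] show ?thesis by simp
qed

lemma div_eq_sum_indicator:
  "x div y = (\<Sum>m<x. if y = 0 then 0 else if Suc m * y \<le> x then 1 else 0 :: nat)"
proof (cases "y = 0")
  case False
  then have "Suc m * y \<le> x \<longleftrightarrow> m < x div y" for m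
    by (simp add: less_eq_div_iff_mult_less_eq Suc_le_eq[symmetric])
  moreover have "{..<x} \<inter> {m. m < x div y} = {..<x div y}"
    by (auto intro: less_le_trans[OF _ div_le_dividend])
  ultimately show ?thesis
    using False by (simp add: sum.If_cases)
qed simp

lemma computable_nary_div:
  assumes "computable_nary k g\<^sub>1" and "computable_nary k g\<^sub>2"
  shows "computable_nary k (\<lambda>xs. g\<^sub>1 xs div g\<^sub>2 xs)"
proof -
  have "computable_nary 2 (\<lambda>xs. \<Sum>m<xs ! 0. (\<lambda>ys. if ys ! 2 = 0 then 0
      else if Suc (ys ! 0) * ys ! 2 - ys ! 1 = 0 then 1 else 0) (m # xs))"
    by (intro computable_nary_sum computable_nary_if_zero computable_nary_diff computable_nary_mult
        computable_nary_Suc computable_nary_proj computable_nary_const) auto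
  then have "computable_nary 2 (\<lambda>xs. xs ! 0 div xs ! 1)"
  proof (rule computable_nary_cong)
    fix xs :: "nat list"
    show "(\<Sum>m<xs ! 0. (\<lambda>ys. if ys ! 2 = 0 then 0
      else if Suc (ys ! 0) * ys ! 2 - ys ! 1 = 0 then 1 else 0) (m # xs)) = xs ! 0 div xs ! 1"
      by (simp add: div_eq_sum_indicator[of "xs ! 0"] numeral_2_eq_2 cong: if_cong)
  qed
  from computable_nary_comp2[OF this assms] show ?thesis by simp
qed

section \<open>Program codes and halting times\<close>

lemma prog_code_snoc: "prog_code (s @ [b]) = 2 * prog_code s + (if b then 1 else 0)"
  by (simp add: prog_code_def)

lemma prog_code_pos: "0 < prog_code s"
  by (induction s rule: rev_induct) (simp_all add: prog_code_def)

lemma bin_prog_code: "bin (prog_code s) = s"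
proof (induction s rule: rev_induct)
  case Nil
  show ?case by (simp add: prog_code_def)
next
  case (snoc b s)
  have "1 < prog_code (s @ [b])"
    using prog_code_pos[of s] by (simp add: prog_code_snoc)
  then have "bin (prog_code (s @ [b])) = bin (prog_code (s @ [b]) div 2) @ [odd (prog_code (s @ [b]))]"
    by simp
  then show ?case
    using snoc.IH by (simp add: prog_code_snoc)
qed

lemma prog_code_bin: "0 < n \<Longrightarrow> prog_code (bin n) = n"
proof (induction n rule: bin.induct)
  case (1 n)
  show ?case
  proof (cases "n \<le> 1")
    case True
    with "1.prems" show ?thesis by (simp add: prog_code_def)
  next
    case False
    then have "prog_code (bin n) = 2 * prog_code (bin (n div 2)) + (if odd n then 1 else 0)"
      by (simp add: prog_code_snoc)
    also have "\<dots> = n"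
      using "1.IH" False by simp
    finally show ?thesis .
  qed
qed

lemma surj_bin_Suc: "surj (\<lambda>j. bin (Suc j))"
proof (rule surjI)
  fix p
  show "bin (Suc (prog_code p - 1)) = p"
    using prog_code_pos[of p] bin_prog_code[of p] by simp
qed

declare bin.simps [simp del]

definition first_time :: "(nat \<Rightarrow> nat) \<Rightarrow> enat" where
  "first_time s = (if \<exists>k. s k \<noteq> 0 then enat (LEAST k. s k \<noteq> 0) else \<infinity>)"

lemma first_time_eq_enat_iff: "first_time s = enat t \<longleftrightarrow> s t \<noteq> 0 \<and> (\<forall>k<t. s k = 0)"
proof
  assume first: "first_time s = enat t"
  then have ex: "\<exists>k. s k \<noteq> 0"
    by (rule contrapos_pp) (simp add: first_time_def)
  with first have least: "t = (LEAST k. s k \<noteq> 0)"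
    by (simp add: first_time_def)
  have "s t \<noteq> 0"
    unfolding least by (rule LeastI_ex[OF ex])
  moreover have "s k = 0" if "k < t" for k
    using not_less_Least[of k "\<lambda>k. s k \<noteq> 0"] that least by simp
  ultimately show "s t \<noteq> 0 \<and> (\<forall>k<t. s k = 0)"
    by blast
next
  assume signal: "s t \<noteq> 0 \<and> (\<forall>k<t. s k = 0)"
  then have "(LEAST k. s k \<noteq> 0) = t"
    by (intro Least_equality) (auto simp: not_less[symmetric])
  moreover have "\<exists>k. s k \<noteq> 0"
    using signal by blast
  ultimately show "first_time s = enat t"
    by (simp add: first_time_def)
qed

lemma sum_first_time:
  "(\<Sum>k<Suc T. if s k \<noteq> 0 \<and> (\<Sum>i<k. s i) = 0 then f k else 0) =
   (case first_time s of enat t \<Rightarrow> if t \<le> T then f t else 0 | \<infinity> \<Rightarrow> 0)"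
proof -
  have "s k \<noteq> 0 \<and> (\<Sum>i<k. s i) = 0 \<longleftrightarrow> first_time s = enat k" for k
    by (auto simp: first_time_eq_enat_iff)
  then have "(\<Sum>k<Suc T. if s k \<noteq> 0 \<and> (\<Sum>i<k. s i) = 0 then f k else 0) =
        (\<Sum>k<Suc T. if first_time s = enat k then f k else 0)"
    by (simp only:)
  then show ?thesis
    by (cases "first_time s") (simp_all add: sum.delta' less_Suc_eq_le)
qed

definition halting_signal :: "(nat \<Rightarrow> nat) \<Rightarrow> (nat \<Rightarrow> nat) \<Rightarrow> (nat \<Rightarrow> nat) \<Rightarrow> nat \<Rightarrow> nat \<Rightarrow> nat" where
  "halting_signal init step halt i k = halt ((step ^^ k) (init i))"

lemma htime_eq_first_time:
  "htime init step halt p = first_time (halting_signal init step halt (prog_code p))"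
  by (simp add: htime_def first_time_def halts_after_def[abs_def] halting_signal_def)

lemma computable_nary_halting_signal:
  assumes "computable1 init" and "computable1 step" and "computable1 halt"
    and "computable_nary k g\<^sub>1" and "computable_nary k g\<^sub>2"
  shows "computable_nary k (\<lambda>xs. halting_signal init step halt (g\<^sub>1 xs) (g\<^sub>2 xs))"
  unfolding halting_signal_def
  by (intro computable_nary_compose1[OF assms(3)] computable_nary_funpow[OF assms(2)]
      computable_nary_compose1[OF assms(1)] assms(4,5))

(* Note recip_time (enat 0) = 0, since 1 / 0 = 0; hence the hypothesis that halting times are
   at least 1 is needed only for positivity of Upsilon. *)
definition recip_time :: "enat \<Rightarrow> real" where
  "recip_time t = (case t of enat k \<Rightarrow> 1 / real k | \<infinity> \<Rightarrow> 0)"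

lemma recip_time_enat [simp]: "recip_time (enat k) = 1 / real k"
  and recip_time_infinity [simp]: "recip_time \<infinity> = 0"
  by (simp_all add: recip_time_def)

lemma recip_time_nonneg: "0 \<le> recip_time t"
  by (cases t) simp_all

lemma recip_time_le_1: "recip_time t \<le> 1"
  by (cases t) (auto simp: divide_le_eq_1)

lemma recip_time_pos: "1 \<le> t \<Longrightarrow> t \<noteq> \<infinity> \<Longrightarrow> 0 < recip_time t"
  by (cases t) (simp_all add: one_enat_def)

lemma recip_time_truncation:
  assumes "0 < T"
  shows "0 \<le> recip_time t - (if t \<le> enat T then recip_time t else 0) \<and>
         recip_time t - (if t \<le> enat T then recip_time t else 0) \<le> 1 / real T"
  using assms by (cases t) (simp_all add: recip_time_nonneg frac_le)

section \<open>Dyadic series\<close>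

definition dyadic_series :: "(nat \<Rightarrow> real) \<Rightarrow> real" where
  "dyadic_series c = (\<Sum>j. (1/2) ^ Suc j * c j)"

lemma summable_dyadic_series:
  assumes "\<And>j. \<bar>c j\<bar> \<le> 1"
  shows "summable (\<lambda>j. (1/2) ^ Suc j * c j :: real)"
proof (rule summable_comparison_test')
  show "summable (\<lambda>j. (1/2) ^ Suc j :: real)"
    using power_half_series by (rule sums_summable)
  show "norm ((1/2) ^ Suc j * c j) \<le> (1/2) ^ Suc j" for j
    using assms[of j] by (simp add: abs_mult mult_left_le)
qed

lemma dyadic_series_pos:
  assumes "\<And>j. 0 \<le> c j" and "\<And>j. c j \<le> 1" and "0 < c i"
  shows "0 < dyadic_series c"
  unfolding dyadic_series_def
  using assms by (intro suminf_pos2[where i = i] summable_dyadic_series) auto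

lemma dyadic_series_less_1:
  assumes "\<And>j. 0 \<le> c j" and "\<And>j. c j \<le> 1" and "c i < 1"
  shows "dyadic_series c < 1"
proof -
  have "summable (\<lambda>j. (1/2) ^ Suc j * c j)" and "summable (\<lambda>j. (1/2) ^ Suc j * (1 - c j))"
    using assms(1,2) by (intro summable_dyadic_series; simp add: abs_le_iff)+
  then have "dyadic_series c + dyadic_series (\<lambda>j. 1 - c j) =
      (\<Sum>j. (1/2) ^ Suc j * c j + (1/2) ^ Suc j * (1 - c j))"
    unfolding dyadic_series_def by (rule suminf_add)
  also have "\<dots> = (\<Sum>j. (1/2) ^ Suc j)"
    by (intro arg_cong[where f = suminf] ext) (simp add: right_diff_distrib)
  also have "\<dots> = 1"
    using power_half_series by (rule sums_unique[symmetric])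
  finally show ?thesis
    using dyadic_series_pos[of "\<lambda>j. 1 - c j" i] assms by simp
qed

lemma dyadic_series_tail:
  assumes "\<And>j. 0 \<le> c j" and "\<And>j. c j \<le> 1"
  shows "0 \<le> dyadic_series c - (\<Sum>j<N. (1/2) ^ Suc j * c j) \<and>
         dyadic_series c - (\<Sum>j<N. (1/2) ^ Suc j * c j) \<le> (1/2) ^ N"
proof -
  let ?w = "\<lambda>j. (1/2::real) ^ Suc j"
  have summable: "summable (\<lambda>j. ?w j * c j)"
    using assms by (intro summable_dyadic_series) (simp add: abs_le_iff)
  have split: "dyadic_series c = (\<Sum>m. ?w (m + N) * c (m + N)) + (\<Sum>j<N. ?w j * c j)"
    unfolding dyadic_series_def by (rule suminf_split_initial_segment[OF summable])
  have geometric: "(\<lambda>m. (1/2) ^ N * ?w m) sums ((1/2) ^ N * 1)"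
    by (intro sums_mult power_half_series)
  have "(\<Sum>m. ?w (m + N) * c (m + N)) \<le> (\<Sum>m. (1/2) ^ N * ?w m)"
  proof (rule suminf_le)
    show "?w (m + N) * c (m + N) \<le> (1/2) ^ N * ?w m" for m
      using assms(2)[of "m + N"] by (simp add: power_add mult_left_le)
    show "summable (\<lambda>m. ?w (m + N) * c (m + N))"
      by (rule summable_ignore_initial_segment[OF summable])
    show "summable (\<lambda>m. (1/2) ^ N * ?w m)"
      using geometric by (rule sums_summable)
  qed
  then have "(\<Sum>m. ?w (m + N) * c (m + N)) \<le> (1/2) ^ N"
    using sums_unique[OF geometric] by simp
  moreover have "0 \<le> (\<Sum>m. ?w (m + N) * c (m + N))"
    using summable_ignore_initial_segment[OF summable] assms(1) by (intro suminf_nonneg) simp_all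
  ultimately show ?thesis
    using split by linarith
qed

lemma dyadic_series_approx:
  assumes "\<And>j. 0 \<le> c j" and "\<And>j. c j \<le> 1" and "0 \<le> \<epsilon>"
    and "\<And>j. j < N \<Longrightarrow> 0 \<le> c j - d j \<and> c j - d j \<le> \<epsilon>"
  shows "\<bar>(\<Sum>j<N. (1/2) ^ Suc j * d j) - dyadic_series c\<bar> \<le> (1/2) ^ N + \<epsilon>"
proof -
  let ?w = "\<lambda>j. (1/2::real) ^ Suc j"
  have head_eq: "(\<Sum>j<N. ?w j * c j) - (\<Sum>j<N. ?w j * d j) = (\<Sum>j<N. ?w j * (c j - d j))"
    by (simp add: sum_subtractf right_diff_distrib)
  have head_nonneg: "0 \<le> (\<Sum>j<N. ?w j * (c j - d j))"
    using assms(4) by (intro sum_nonneg) simp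
  have "(\<Sum>j<N. ?w j * (c j - d j)) \<le> (\<Sum>j<N. ?w j) * \<epsilon>"
    unfolding sum_distrib_right using assms(4) by (intro sum_mono mult_left_mono) simp_all
  also have "\<dots> \<le> 1 * \<epsilon>"
    using sum_le_suminf[OF sums_summable[OF power_half_series], of "{..<N}"] sums_unique[OF power_half_series]
    by (intro mult_right_mono assms(3)) simp_all
  finally have head_le: "(\<Sum>j<N. ?w j * (c j - d j)) \<le> \<epsilon>"
    by simp
  show ?thesis
    using dyadic_series_tail[of c N, OF assms(1,2)] head_eq head_nonneg head_le by linarith
qed

section \<open>Rational approximations of Upsilon\<close>

lemma real_fact_div: "t \<le> T \<Longrightarrow> real (fact T div t) = fact T / real t"
  by (cases "t = 0") (simp_all add: real_of_nat_div dvd_fact)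

lemma scaled_fact_div:
  assumes "j \<le> n" and "t \<le> T"
  shows "real (2 ^ (n - j) * (fact T div t)) / real (2 ^ Suc n * fact T) =
         (1/2) ^ Suc j * recip_time (enat t)"
proof -
  have "(2::real) ^ Suc n = 2 ^ (n - j) * 2 ^ Suc j"
    using assms(1) by (simp flip: power_add)
  then have "real (2 ^ (n - j) * (fact T div t)) / real (2 ^ Suc n * fact T) =
      2 ^ (n - j) * (fact T / real t) / (2 ^ (n - j) * 2 ^ Suc j * fact T)"
    by (simp only: of_nat_mult of_nat_power of_nat_numeral of_nat_fact real_fact_div[OF assms(2)])
  also have "\<dots> = 1 / (2 ^ Suc j * real t)"
    by (simp add: field_simps)
  finally show ?thesis
    by (simp add: power_one_over)
qed

(* With T = 2^(n+1), the program bin(j+1), j <= n, contributes 2^(n-j) * (T! div t) if it halts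
   after exactly t <= T steps: over the denominator 2^(n+1) * T! this is 2^-(j+1)/t, as t divides
   T!.  The inner sum picks out k = t, the first step with a nonzero halting signal. *)
definition upsilon_numer :: "(nat \<Rightarrow> nat) \<Rightarrow> (nat \<Rightarrow> nat) \<Rightarrow> (nat \<Rightarrow> nat) \<Rightarrow> nat \<Rightarrow> nat" where
  "upsilon_numer init step halt n =
     (\<Sum>j<Suc n. 2 ^ (n - j) *
        (\<Sum>k<Suc (2 ^ Suc n).
           if halting_signal init step halt (Suc j) k \<noteq> 0 \<and>
              (\<Sum>i<k. halting_signal init step halt (Suc j) i) = 0
           then fact (2 ^ Suc n) div k else 0))"

definition upsilon_denom :: "nat \<Rightarrow> nat" where
  "upsilon_denom n = 2 ^ Suc n * fact (2 ^ Suc n)"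

lemma upsilon_numer_div_denom:
  "real (upsilon_numer init step halt n) / real (upsilon_denom n) =
   (\<Sum>j<Suc n. (1/2) ^ Suc j *
      (if htime init step halt (bin (Suc j)) \<le> enat (2 ^ Suc n)
       then recip_time (htime init step halt (bin (Suc j))) else 0))"
proof -
  define T :: nat where "T = 2 ^ Suc n"
  define h where "h j = htime init step halt (bin (Suc j))" for j
  have inner: "(\<Sum>k<Suc T. if halting_signal init step halt (Suc j) k \<noteq> 0 \<and>
        (\<Sum>i<k. halting_signal init step halt (Suc j) i) = 0 then fact T div k else 0) =
      (case h j of enat t \<Rightarrow> if t \<le> T then fact T div t else 0 | \<infinity> \<Rightarrow> 0)" for j
    unfolding h_def htime_eq_first_time prog_code_bin[OF zero_less_Suc] by (rule sum_first_time)
  have scaled: "real (2 ^ (n - j) * (case h j of enat t \<Rightarrow> if t \<le> T then fact T div t else 0 | \<infinity> \<Rightarrow> 0)) /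
        real (T * fact T) = (1/2) ^ Suc j * (if h j \<le> enat T then recip_time (h j) else 0)"
    if "j < Suc n" for j
  proof (cases "h j")
    case (enat t)
    show ?thesis
    proof (cases "t \<le> T")
      case True
      then have "(case h j of enat t \<Rightarrow> if t \<le> T then fact T div t else 0 | \<infinity> \<Rightarrow> 0) = fact T div t"
        and "(if h j \<le> enat T then recip_time (h j) else 0) = recip_time (enat t)"
        using enat by simp_all
      with scaled_fact_div[OF _ True, of j n] that show ?thesis
        by (simp add: T_def)
    qed (use enat in simp)
  qed simp
  show ?thesis
    unfolding upsilon_numer_def upsilon_denom_def T_def[symmetric] inner h_def[symmetric]
    by (simp only: of_nat_sum sum_divide_distrib) (rule sum.cong[OF refl scaled], simp)
qed

lemma if_zero_if_zero_eq_if_conj: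
  "(if a = 0 then 0 else if b = 0 then c else 0) = (if a \<noteq> 0 \<and> b = 0 then c else (0::nat))"
  by simp

lemma computable_upsilon_numer:
  assumes "computable1 init" and "computable1 step" and "computable1 halt"
  shows "computable1 (upsilon_numer init step halt)"
proof -
  note signal = computable_nary_halting_signal[OF assms]
  (* The argument lists are xs = [n], ys = [j, n], zs = [k, j, n] and ws = [i, k, j, n]. *)
  have "computable_nary 1 (\<lambda>xs. \<Sum>j<Suc (xs ! 0). (\<lambda>ys. 2 ^ (ys ! 1 - ys ! 0) *
      (\<Sum>k<Suc (2 ^ Suc (ys ! 1)). (\<lambda>zs.
         if halting_signal init step halt (Suc (zs ! 1)) (zs ! 0) = 0 then 0
         else if (\<Sum>i<zs ! 0. (\<lambda>ws. halting_signal init step halt (Suc (ws ! 2)) (ws ! 0)) (i # zs)) = 0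
         then fact (2 ^ Suc (zs ! 2)) div zs ! 0 else 0) (k # ys))) (j # xs))"
    by (intro computable_nary_sum computable_nary_mult computable_nary_power2 computable_nary_diff
        computable_nary_if_zero computable_nary_div computable_nary_fact signal
        computable_nary_Suc computable_nary_proj computable_nary_const) auto
  then have "computable_nary 1 (\<lambda>xs. upsilon_numer init step halt (xs ! 0))"
    unfolding upsilon_numer_def
    by (rule computable_nary_cong) (simp del: sum.lessThan_Suc sum_eq_0_iff add: if_zero_if_zero_eq_if_conj cong: if_cong)
  then show ?thesis
    by (rule computable1_of_nary)
qed

lemma computable_upsilon_denom: "computable1 upsilon_denom"
  by (rule computable1_of_nary, unfold upsilon_denom_def)
     (intro computable_nary_mult computable_nary_power2 computable_nary_fact computable_nary_Suc
       computable_nary_proj; simp)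

lemma Upsilon_eq_dyadic_series:
  "Upsilon init step halt = dyadic_series (\<lambda>j. recip_time (htime init step halt (bin (Suc j))))"
  unfolding Upsilon_def dyadic_series_def
  by (intro arg_cong[where f = suminf] ext) (simp split: enat.split)

lemma Upsilon_pos:
  assumes "\<exists>p. htime init step halt p \<noteq> \<infinity>" and "\<forall>p. htime init step halt p \<ge> 1"
  shows "0 < Upsilon init step halt"
proof -
  obtain j where "htime init step halt (bin (Suc j)) \<noteq> \<infinity>"
    using assms(1) surj_bin_Suc by (metis surjD)
  then have "0 < recip_time (htime init step halt (bin (Suc j)))"
    using assms(2) by (intro recip_time_pos) simp_all
  then show ?thesis
    unfolding Upsilon_eq_dyadic_series
    by (intro dyadic_series_pos[where i = j] recip_time_nonneg recip_time_le_1)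
qed

lemma Upsilon_less_1:
  assumes "\<exists>p. htime init step halt p = \<infinity>"
  shows "Upsilon init step halt < 1"
proof -
  obtain j where "htime init step halt (bin (Suc j)) = \<infinity>"
    using assms surj_bin_Suc by (metis surjD)
  then have "recip_time (htime init step halt (bin (Suc j))) < 1"
    by simp
  then show ?thesis
    unfolding Upsilon_eq_dyadic_series
    by (intro dyadic_series_less_1[where i = j] recip_time_nonneg recip_time_le_1)
qed

lemma Upsilon_approx:
  "\<bar>real (upsilon_numer init step halt n) / real (upsilon_denom n) - Upsilon init step halt\<bar> \<le> (1/2) ^ n"
proof -
  have "\<bar>real (upsilon_numer init step halt n) / real (upsilon_denom n) - Upsilon init step halt\<bar>
      \<le> (1/2) ^ Suc n + 1 / real (2 ^ Suc n)"
    unfolding upsilon_numer_div_denom Upsilon_eq_dyadic_series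
    by (intro dyadic_series_approx recip_time_nonneg recip_time_le_1 recip_time_truncation) simp_all
  also have "\<dots> = (1/2) ^ n"
    by (simp add: power_one_over)
  finally show ?thesis .
qed

lemma computable_real_Upsilon:
  assumes "computable1 init" and "computable1 step" and "computable1 halt"
  shows "computable_real (Upsilon init step halt)"
  unfolding computable_real_def
proof (intro exI conjI allI impI)
  show "computable1 (upsilon_numer init step halt)"
    using assms by (rule computable_upsilon_numer)
  show "computable1 (\<lambda>_. 0)"
    by (rule computable1_of_nary) (rule computable_nary_zero)
  show "computable1 upsilon_denom"
    by (rule computable_upsilon_denom)
  fix n :: nat
  show "0 < upsilon_denom n"
    by (simp add: upsilon_denom_def)
  show "\<bar>(real (upsilon_numer init step halt n) - real 0) / real (upsilon_denom n) - Upsilon init step halt\<bar>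
      \<le> (1/2) ^ n"
    using Upsilon_approx by simp
qed

theorem mainTheorem1:
  fixes init step halt :: "nat \<Rightarrow> nat"
  assumes "computable1 init" and "computable1 step" and "computable1 halt"
    and "\<exists>p. htime init step halt p \<noteq> \<infinity>"
    and "\<exists>p. htime init step halt p = \<infinity>"
    and "\<forall>p. htime init step halt p \<ge> 1"
  shows "0 < Upsilon init step halt \<and> Upsilon init step halt < 1
         \<and> computable_real (Upsilon init step halt)"
  using Upsilon_pos[OF assms(4,6)] Upsilon_less_1[OF assms(5)] computable_real_Upsilon[OF assms(1-3)]
  by blast

end
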